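(* For every $n\ge1$, $\mathsf{COH}$ admits $n$-fairness preservation. That is, for all $A_0,A_1\subseteq 2^{<\omega}$, every set $C$ that is $n$-fair for $A_0,A_1$, and every uniformly $C$-computable sequence of sets $R_0,R_1,\dots$, there is an $\vec R$-cohesive set $G$ such that $G\oplus C$ is $n$-fair for $A_0,A_1$.
   Context: An infinite set $G$ is $\vec R$-cohesive for a sequence $R_0,R_1,\dots$ if for each $i$, either $G\subseteq^* R_i$ or $G\subseteq^*\overline{R_i}$, where $\subseteq^*$ means inclusion up to finitely many elements. $\mathsf{COH}$ is the statement that every uniform sequence of sets has a cohesive set. Strings are finite binary strings, and $\preceq$ is the prefix relation. Two strings are incomparable if neither is a prefix of the other. Matrices. An $m$-by-$n$ matrix $M$ is an array of strings $\sigma_{i,j}$ ($i<m$, $j<n$), with rows $M(i)=(\sigma_{i,0},\dots,\sigma_{i,n-1})$. It is disjoint if each row consists of pairwise incomparable strings. Formulas. An $m$-by-$n$ formula is a formula with distinguished finite-set variables $U_{i,j}$. It is $\Sigma^{0,X}_1$ if it is $\Sigma^0_1$ relative to $X$. Valuations. An $M$-valuation is a tuple $V=(B_{i,j})$ of finite sets $B_{i,j}\subseteq\{\tau:\tau\succeq\sigma_{i,j}\}$. We write $\varphi(V)$ for $\varphi$ evaluated at $U_{i,j}:=B_{i,j}$, and $V(i)=(B_{i,0},\dots,B_{i,n-1})$. We write $V>s$ if all strings occurring in $V$ have length $>s$. Essential. $\varphi$ is essential in $M$ if for every $s$ there is an $M$-valuation $V>s$ with $\varphi(V)$. Diagonalization.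 An $M$-valuation $V$ diagonalizes against $A_0,A_1$ if for every $i<m$ there are components $L,R$ of $V(i)$ with $L\subseteq A_0$ and $R\subseteq A_1$. Fairness. For $n\ge1$, a set $X$ is $n$-fair for $A_0,A_1$ if the following holds: for every $m$, every $\Sigma^{0,X}_1$ $m$-by-$2^nm$ formula $\varphi$, and every $m$-by-$2^nm$ disjoint matrix $M$ in which $\varphi$ is essential, there is an $M$-valuation $V$ diagonalizing against $A_0,A_1$ with $\varphi(V)$. *)

theory Defs
  imports Main "HOL-Library.Nat_Bijection" "HOL-Library.Sublist"
begin

fun prec_aux :: "(nat list \<Rightarrow> nat option) \<Rightarrow> (nat list \<Rightarrow> nat option) \<Rightarrow> nat \<Rightarrow> nat list \<Rightarrow> nat option" where
  "prec_aux g h 0 xs = g xs"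
| "prec_aux g h (Suc n) xs = (case prec_aux g h n xs of None \<Rightarrow> None | Some r \<Rightarrow> h (n # r # xs))"

definition mu_op :: "(nat list \<Rightarrow> nat option) \<Rightarrow> nat list \<Rightarrow> nat option" where
  "mu_op f xs = (if \<exists>n. f (n # xs) = Some 0 \<and> (\<forall>m<n. f (m # xs) \<noteq> None)
                 then Some (LEAST n. f (n # xs) = Some 0 \<and> (\<forall>m<n. f (m # xs) \<noteq> None))
                 else None)"

text \<open>recfn X k f: f is a k-ary partial recursive function with oracle X
 (only its values on argument lists of length k matter).\<close>
inductive recfn :: "nat set \<Rightarrow> nat \<Rightarrow> (nat list \<Rightarrow> nat option) \<Rightarrow> bool" for X :: "nat set" where
  zero: "recfn X k (\<lambda>xs. Some 0)"
| succ: "recfn X 1 (\<lambda>xs. Some (Suc (hd xs)))"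
| proj: "i < k \<Longrightarrow> recfn X k (\<lambda>xs. Some (xs ! i))"
| orac: "recfn X 1 (\<lambda>xs. Some (if hd xs \<in> X then 1 else 0))"
| compose: "recfn X m g \<Longrightarrow> length fs = m \<Longrightarrow> (\<forall>f\<in>set fs. recfn X k f) \<Longrightarrow>
     recfn X k (\<lambda>xs. if (\<forall>f\<in>set fs. f xs \<noteq> None) then g (map (\<lambda>f. the (f xs)) fs) else None)"
| prim_rec: "recfn X k g \<Longrightarrow> recfn X (Suc (Suc k)) h \<Longrightarrow>
     recfn X (Suc k) (\<lambda>ys. prec_aux g h (hd ys) (tl ys))"
| mu: "recfn X (Suc k) f \<Longrightarrow> recfn X k (mu_op f)"

definition ce_in :: "nat set \<Rightarrow> nat set \<Rightarrow> bool" where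
  "ce_in X W \<longleftrightarrow> (\<exists>f. recfn X 1 f \<and> (\<forall>x. x \<in> W \<longleftrightarrow> f [x] \<noteq> None))"

definition unif_computable :: "nat set \<Rightarrow> (nat \<Rightarrow> nat set) \<Rightarrow> bool" where
  "unif_computable X R \<longleftrightarrow>
     (\<exists>f. recfn X 2 f \<and> (\<forall>i x. f [i, x] = Some (if x \<in> R i then 1 else 0)))"

definition join :: "nat set \<Rightarrow> nat set \<Rightarrow> nat set" where
  "join G C = {2 * x | x. x \<in> G} \<union> {2 * x + 1 | x. x \<in> C}"

definition cohesive :: "(nat \<Rightarrow> nat set) \<Rightarrow> nat set \<Rightarrow> bool" where
  "cohesive R G \<longleftrightarrow> infinite G \<and> (\<forall>i. finite (G - R i) \<or> finite (G - (- R i)))"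

type_synonym str = "bool list"

fun str_code :: "str \<Rightarrow> nat" where
  "str_code [] = 0"
| "str_code (b # s) = 2 * str_code s + (if b then 2 else 1)"

text \<open>An m-by-N matrix is M :: nat => nat => str (entries i<m, j<N);
 an M-valuation V :: nat => nat => str set likewise.\<close>

definition incomparable :: "str \<Rightarrow> str \<Rightarrow> bool" where
  "incomparable s t \<longleftrightarrow> \<not> prefix s t \<and> \<not> prefix t s"

definition disjoint_matrix :: "nat \<Rightarrow> nat \<Rightarrow> (nat \<Rightarrow> nat \<Rightarrow> str) \<Rightarrow> bool" where
  "disjoint_matrix m N M \<longleftrightarrow>
     (\<forall>i<m. \<forall>j<N. \<forall>k<N. j \<noteq> k \<longrightarrow> incomparable (M i j) (M i k))"

definition is_valuation :: "nat \<Rightarrow> nat \<Rightarrow> (nat \<Rightarrow> nat \<Rightarrow> str) \<Rightarrow> (nat \<Rightarrow> nat \<Rightarrow> str set) \<Rightarrow> bool" where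
  "is_valuation m N M V \<longleftrightarrow>
     (\<forall>i<m. \<forall>j<N. finite (V i j) \<and> (\<forall>\<tau>\<in>V i j. prefix (M i j) \<tau>))"

definition val_gt :: "nat \<Rightarrow> nat \<Rightarrow> (nat \<Rightarrow> nat \<Rightarrow> str set) \<Rightarrow> nat \<Rightarrow> bool" where
  "val_gt m N V s \<longleftrightarrow> (\<forall>i<m. \<forall>j<N. \<forall>\<tau>\<in>V i j. s < length \<tau>)"

definition val_code :: "nat \<Rightarrow> nat \<Rightarrow> (nat \<Rightarrow> nat \<Rightarrow> str set) \<Rightarrow> nat" where
  "val_code m N V =
     list_encode (map (\<lambda>i. list_encode (map (\<lambda>j. set_encode (str_code ` V i j)) [0..<N])) [0..<m])"

text \<open>An m-by-N formula phi (identified with its meaning, a predicate on tuples of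
 finite sets U_ij) is Sigma^0_1 relative to X: the set of codes of satisfying
 tuples is X-c.e.\<close>
definition sigma1_formula :: "nat set \<Rightarrow> nat \<Rightarrow> nat \<Rightarrow> ((nat \<Rightarrow> nat \<Rightarrow> str set) \<Rightarrow> bool) \<Rightarrow> bool" where
  "sigma1_formula X m N \<phi> \<longleftrightarrow>
     (\<exists>W. ce_in X W \<and>
        (\<forall>V. (\<forall>i<m. \<forall>j<N. finite (V i j)) \<longrightarrow> (\<phi> V \<longleftrightarrow> val_code m N V \<in> W)))"

definition essential :: "nat \<Rightarrow> nat \<Rightarrow> ((nat \<Rightarrow> nat \<Rightarrow> str set) \<Rightarrow> bool) \<Rightarrow> (nat \<Rightarrow> nat \<Rightarrow> str) \<Rightarrow> bool" where
  "essential m N \<phi> M \<longleftrightarrow> (\<forall>s. \<exists>V. is_valuation m N M V \<and> val_gt m N V s \<and> \<phi> V)"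

definition diagonalizes :: "nat \<Rightarrow> nat \<Rightarrow> (nat \<Rightarrow> nat \<Rightarrow> str set) \<Rightarrow> str set \<Rightarrow> str set \<Rightarrow> bool" where
  "diagonalizes m N V A0 A1 \<longleftrightarrow> (\<forall>i<m. \<exists>j<N. \<exists>k<N. V i j \<subseteq> A0 \<and> V i k \<subseteq> A1)"

definition fair :: "nat \<Rightarrow> nat set \<Rightarrow> str set \<Rightarrow> str set \<Rightarrow> bool" where
  "fair n X A0 A1 \<longleftrightarrow>
     (\<forall>m \<phi> M. sigma1_formula X m (2 ^ n * m) \<phi> \<longrightarrow> disjoint_matrix m (2 ^ n * m) M \<longrightarrow>
        essential m (2 ^ n * m) \<phi> M \<longrightarrow>
        (\<exists>V. is_valuation m (2 ^ n * m) M V \<and> diagonalizes m (2 ^ n * m) V A0 A1 \<and> \<phi> V))"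

end

theory Submission
  imports Defs "HOL-Library.Countable"
begin

text \<open>G is built by Mathias forcing with conditions (F, X): F finite, X an infinite C-computable
  reservoir above F. At stage s we first look at the s-th requirement, consisting of a size m, a
  program enumerating a Sigma_1 formula \<phi> relative to G \<oplus> C, and an m-row matrix M. If some
  diagonalizing M-valuation V has a finite extension F \<union> D with D \<subseteq> X relative to which the program
  accepts V, we commit to such an extension and cut X above the use of that computation, so that
  \<phi>(V) holds for every G compatible with the new condition. Then X is shrunk to X \<inter> R_s or
  X - R_s, whichever is infinite, and min X moves into F; this makes G cohesive.

  If \<phi> is essential in M, then so is \<psi>(V) = "some finite extension inside X makes the program
  accept V", because G itself agrees with such an extension below the use. As the oracles for all
  finite extensions are uniformly C-computable, \<psi> is Sigma_1 relative to C, so the fairness of C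
  provides a diagonalizing V with \<psi>(V): the requirement was acted upon. Showing that \<psi> is
  Sigma_1 needs stage approximations of oracle programs that are uniform in the oracle index.\<close>

section \<open>Total computable functions\<close>

definition computable :: "nat set \<Rightarrow> nat \<Rightarrow> (nat list \<Rightarrow> nat) \<Rightarrow> bool" where
  "computable X k f \<longleftrightarrow> (\<exists>g. recfn X k g \<and> (\<forall>xs. length xs = k \<longrightarrow> g xs = Some (f xs)))"

lemma computable_cong:
  "computable X k f \<Longrightarrow> (\<And>xs. length xs = k \<Longrightarrow> f xs = f' xs) \<Longrightarrow> computable X k f'"
  unfolding computable_def by metis

lemma computable_zero: "computable X k (\<lambda>xs. 0)"
  unfolding computable_def using recfn.zero by blast

lemma computable_proj: "i < k \<Longrightarrow> computable X k (\<lambda>xs. xs ! i)"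
  unfolding computable_def using recfn.proj by blast

lemma computable_Suc: "computable X 1 (\<lambda>xs. Suc (xs ! 0))"
  unfolding computable_def
  by (rule exI[of _ "\<lambda>xs. Some (Suc (hd xs))"])
    (use recfn.succ[of X] in \<open>auto simp: length_Suc_conv\<close>)

lemma computable_oracle: "computable X 1 (\<lambda>xs. if xs ! 0 \<in> X then 1 else 0)"
  unfolding computable_def
  by (rule exI[of _ "\<lambda>xs. Some (if hd xs \<in> X then 1 else 0)"])
    (use recfn.orac[of X] in \<open>auto simp: length_Suc_conv\<close>)

lemma computable_comp:
  assumes g: "computable X m g" and len: "length fs = m" and fs: "\<forall>f\<in>set fs. computable X k f"
  shows "computable X k (\<lambda>xs. g (map (\<lambda>f. f xs) fs))"
proof -
  obtain g' where g': "recfn X m g'" "\<And>ys. length ys = m \<Longrightarrow> g' ys = Some (g ys)"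
    using g unfolding computable_def by blast
  obtain F where F: "\<And>f. f \<in> set fs \<Longrightarrow> recfn X k (F f)"
    "\<And>f xs. f \<in> set fs \<Longrightarrow> length xs = k \<Longrightarrow> F f xs = Some (f xs)"
    using bchoice[OF fs[unfolded computable_def]] by metis
  have "recfn X k (\<lambda>xs. if \<forall>h\<in>set (map F fs). h xs \<noteq> None
                        then g' (map (\<lambda>h. the (h xs)) (map F fs)) else None)"
    by (rule recfn.compose[OF g'(1)]) (use len F(1) in auto)
  moreover have "(if \<forall>h\<in>set (map F fs). h xs \<noteq> None
                  then g' (map (\<lambda>h. the (h xs)) (map F fs)) else None)
                 = Some (g (map (\<lambda>f. f xs) fs))"
    if "length xs = k" for xs
  proof -
    have "map (\<lambda>h. the (h xs)) (map F fs) = map (\<lambda>f. f xs) fs"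
      unfolding map_map by (rule map_cong) (simp_all add: F(2) that)
    then show ?thesis using F(2) that g'(2) len by (auto simp del: map_map)
  qed
  ultimately show ?thesis unfolding computable_def by blast
qed

lemma computable_comp_eq:
  assumes "computable X m g" "length fs = m" "\<And>f. f \<in> set fs \<Longrightarrow> computable X k f"
    and "\<And>xs. length xs = k \<Longrightarrow> h xs = g (map (\<lambda>f. f xs) fs)"
  shows "computable X k h"
  using computable_comp[of X m g fs k] assms by (auto intro: computable_cong)

lemma computable_comp1: "computable X 1 g \<Longrightarrow> computable X k f \<Longrightarrow> computable X k (\<lambda>xs. g [f xs])"
  by (rule computable_comp_eq[where fs="[f]"]) auto

lemma computable_comp2:
  "computable X 2 g \<Longrightarrow> computable X k f1 \<Longrightarrow> computable X k f2 \<Longrightarrow>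
   computable X k (\<lambda>xs. g [f1 xs, f2 xs])"
  by (rule computable_comp_eq[where fs="[f1, f2]"]) (auto simp: numeral_2_eq_2)

lemma computable_unop:
  "computable X 1 (\<lambda>xs. op (xs ! 0)) \<Longrightarrow> computable X k f \<Longrightarrow> computable X k (\<lambda>xs. op (f xs))"
  using computable_comp1 by fastforce

lemma computable_binop:
  "computable X 2 (\<lambda>xs. op (xs ! 0) (xs ! 1)) \<Longrightarrow> computable X k f \<Longrightarrow> computable X k g \<Longrightarrow>
   computable X k (\<lambda>xs. op (f xs) (g xs))"
  using computable_comp2 by fastforce

lemma computable_select:
  "computable X m g \<Longrightarrow> length idxs = m \<Longrightarrow> \<forall>i\<in>set idxs. i < k \<Longrightarrow>
   computable X k (\<lambda>ys. g (map (\<lambda>i. ys ! i) idxs))"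
  by (rule computable_comp_eq[where fs="map (\<lambda>i ys. ys ! i) idxs"])
    (auto intro: computable_proj simp: comp_def)

lemma map_nth_upt_drop: "map (\<lambda>i. xs ! i) [n..<length xs] = drop n xs"
  by (rule nth_equalityI) auto

lemma computable_select_drop:
  assumes g: "computable X (length idxs + (k - n)) g" and idx: "\<forall>i\<in>set idxs. i < k"
  shows "computable X k (\<lambda>ys. g (map (\<lambda>i. ys ! i) idxs @ drop n ys))"
proof -
  have "computable X k (\<lambda>ys. g (map (\<lambda>i. ys ! i) (idxs @ [n..<k])))"
    using idx by (intro computable_select[OF g]) auto
  then show ?thesis
  proof (rule computable_cong)
    fix ys :: "nat list" assume "length ys = k"
    then show "g (map (\<lambda>i. ys ! i) (idxs @ [n..<k])) = g (map (\<lambda>i. ys ! i) idxs @ drop n ys)"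
      using map_nth_upt_drop[of ys n] by simp
  qed
qed

fun prim_recursion :: "(nat list \<Rightarrow> nat) \<Rightarrow> (nat list \<Rightarrow> nat) \<Rightarrow> nat \<Rightarrow> nat list \<Rightarrow> nat" where
  "prim_recursion g h 0 xs = g xs"
| "prim_recursion g h (Suc n) xs = h (n # prim_recursion g h n xs # xs)"

lemma computable_prim_recursion:
  assumes g: "computable X k g" and h: "computable X (Suc (Suc k)) h"
  shows "computable X (Suc k) (\<lambda>ys. prim_recursion g h (hd ys) (tl ys))"
proof -
  obtain g' where g': "recfn X k g'" "\<And>ys. length ys = k \<Longrightarrow> g' ys = Some (g ys)"
    using g unfolding computable_def by blast
  obtain h' where h': "recfn X (Suc (Suc k)) h'"
    "\<And>ys. length ys = Suc (Suc k) \<Longrightarrow> h' ys = Some (h ys)"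
    using h unfolding computable_def by blast
  have "length xs = k \<Longrightarrow> prec_aux g' h' n xs = Some (prim_recursion g h n xs)" for n xs
    by (induction n) (auto simp: g' h')
  then show ?thesis
    unfolding computable_def using recfn.prim_rec[OF g'(1) h'(1)]
    by (intro exI[of _ "\<lambda>ys. prec_aux g' h' (hd ys) (tl ys)"]) auto
qed

lemma computable_prim_recursion_at:
  assumes eq: "\<And>xs. length xs = k \<Longrightarrow> f xs = prim_recursion g h (a xs) xs"
    and a: "computable X k a" and g: "computable X k g" and h: "computable X (Suc (Suc k)) h"
  shows "computable X k f"
proof (rule computable_comp_eq[OF computable_prim_recursion[OF g h]])
  show "length (a # map (\<lambda>i xs. xs ! i) [0..<k]) = Suc k" by simp
  show "f' \<in> set (a # map (\<lambda>i xs. xs ! i) [0..<k]) \<Longrightarrow> computable X k f'" for f'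
    using a computable_proj by auto
  fix xs :: "nat list" assume "length xs = k"
  then show "f xs = prim_recursion g h (hd (map (\<lambda>f. f xs) (a # map (\<lambda>i xs. xs ! i) [0..<k])))
                       (tl (map (\<lambda>f. f xs) (a # map (\<lambda>i xs. xs ! i) [0..<k])))"
    using eq map_nth[of xs] by (simp add: comp_def)
qed

lemma computable_const: "computable X k (\<lambda>xs. c)"
proof (induction c)
  case 0 show ?case by (rule computable_zero)
next
  case (Suc c) show ?case using computable_unop[OF computable_Suc Suc] .
qed

lemma computable_add:
  assumes "computable X k f" "computable X k g"
  shows "computable X k (\<lambda>xs. f xs + g xs)"
proof -
  have rec: "prim_recursion (\<lambda>xs. xs ! 1) (\<lambda>ys. Suc (ys ! 1)) n xs = n + xs ! 1" for n xs
    by (induction n) auto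
  have "computable X 2 (\<lambda>xs. xs ! 0 + xs ! 1)"
    by (rule computable_prim_recursion_at[where a="\<lambda>xs. xs ! 0" and g="\<lambda>xs. xs ! 1"
        and h="\<lambda>ys. Suc (ys ! 1)"], simp only: rec)
      (intro computable_proj computable_unop[OF computable_Suc] | simp)+
  then show ?thesis using assms by (rule computable_binop)
qed

lemma computable_mult:
  assumes "computable X k f" "computable X k g"
  shows "computable X k (\<lambda>xs. f xs * g xs)"
proof -
  have rec: "prim_recursion (\<lambda>xs. 0) (\<lambda>ys. ys ! 1 + ys ! 3) n xs = n * xs ! 1" for n xs
    by (induction n) auto
  have "computable X 2 (\<lambda>xs. xs ! 0 * xs ! 1)"
    by (rule computable_prim_recursion_at[where a="\<lambda>xs. xs ! 0" and g="\<lambda>xs. 0"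
        and h="\<lambda>ys. ys ! 1 + ys ! 3"], simp only: rec)
      (intro computable_proj computable_const computable_add | simp)+
  then show ?thesis using assms by (rule computable_binop)
qed

lemma computable_diff:
  assumes "computable X k f" "computable X k g"
  shows "computable X k (\<lambda>xs. f xs - g xs)"
proof -
  have rec_pred: "prim_recursion (\<lambda>xs. 0) (\<lambda>ys. ys ! 0) n xs = n - 1" for n xs
    by (induction n) auto
  have pred: "computable X 1 (\<lambda>xs. xs ! 0 - 1)"
    by (rule computable_prim_recursion_at[where a="\<lambda>xs. xs ! 0" and g="\<lambda>xs. 0"
        and h="\<lambda>ys. ys ! 0"], simp only: rec_pred)
      (intro computable_proj computable_const | simp)+
  have rec: "prim_recursion (\<lambda>xs. xs ! 0) (\<lambda>ys. ys ! 1 - 1) n xs = xs ! 0 - n" for n xs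
    by (induction n) auto
  have "computable X 2 (\<lambda>xs. xs ! 0 - xs ! 1)"
    by (rule computable_prim_recursion_at[where a="\<lambda>xs. xs ! 1" and g="\<lambda>xs. xs ! 0"
        and h="\<lambda>ys. ys ! 1 - 1"], simp only: rec)
      (intro computable_proj computable_unop[OF pred] | simp)+
  then show ?thesis using assms by (rule computable_binop)
qed

lemma computable_mod2:
  assumes "computable X k f"
  shows "computable X k (\<lambda>xs. f xs mod 2)"
proof -
  have rec: "prim_recursion (\<lambda>xs. 0) (\<lambda>ys. 1 - ys ! 1) n xs = n mod 2" for n xs
    by (induction n) (auto simp: mod_Suc)
  have "computable X 1 (\<lambda>xs. xs ! 0 mod 2)"
    by (rule computable_prim_recursion_at[where a="\<lambda>xs. xs ! 0" and g="\<lambda>xs. 0"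
        and h="\<lambda>ys. 1 - ys ! 1"], simp only: rec)
      (intro computable_proj computable_const computable_diff | simp)+
  then show ?thesis using assms by (rule computable_unop)
qed

lemma computable_div2:
  assumes "computable X k f"
  shows "computable X k (\<lambda>xs. f xs div 2)"
proof -
  have rec: "prim_recursion (\<lambda>xs. 0) (\<lambda>ys. ys ! 1 + ys ! 0 mod 2) n xs = n div 2" for n xs
    by (induction n) (auto, presburger)
  have "computable X 1 (\<lambda>xs. xs ! 0 div 2)"
    by (rule computable_prim_recursion_at[where a="\<lambda>xs. xs ! 0" and g="\<lambda>xs. 0"
        and h="\<lambda>ys. ys ! 1 + ys ! 0 mod 2"], simp only: rec)
      (intro computable_proj computable_const computable_add computable_mod2 | simp)+
  then show ?thesis using assms by (rule computable_unop)
qed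

lemma computable_div_power2:
  assumes "computable X k f" "computable X k g"
  shows "computable X k (\<lambda>xs. g xs div 2 ^ f xs)"
proof -
  have rec: "prim_recursion (\<lambda>xs. xs ! 1) (\<lambda>ys. ys ! 1 div 2) n xs = xs ! 1 div 2 ^ n" for n xs
    by (induction n) (simp_all add: div_mult2_eq[symmetric] mult.commute[of _ 2])
  have "computable X 2 (\<lambda>xs. xs ! 1 div 2 ^ (xs ! 0))"
    by (rule computable_prim_recursion_at[where a="\<lambda>xs. xs ! 0" and g="\<lambda>xs. xs ! 1"
        and h="\<lambda>ys. ys ! 1 div 2"], simp only: rec)
      (intro computable_proj computable_div2 | simp)+
  then show ?thesis using computable_binop[where op="\<lambda>a b. b div 2 ^ a"] assms by blast
qed

lemma computable_sgn: "computable X k f \<Longrightarrow> computable X k (\<lambda>xs. if f xs = 0 then 0 else 1)"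
proof (rule computable_cong)
  assume "computable X k f"
  then show "computable X k (\<lambda>xs. 1 - (1 - f xs))"
    by (intro computable_diff computable_const)
qed auto

lemma computable_if_zero:
  assumes c: "computable X k c" and a: "computable X k a" and b: "computable X k b"
  shows "computable X k (\<lambda>xs. if c xs = 0 then a xs else b xs)"
proof (rule computable_cong)
  show "computable X k (\<lambda>xs. (1 - c xs) * a xs + (if c xs = 0 then 0 else 1) * b xs)"
    by (intro computable_add computable_mult computable_diff computable_const computable_sgn c a b)
qed auto

lemma computable_prod_list:
  "\<forall>f\<in>set fs. computable X k f \<Longrightarrow> computable X k (\<lambda>xs. prod_list (map (\<lambda>f. f xs) fs))"
  by (induction fs) (simp_all add: computable_const computable_mult)

lemma computable_set_decode_member:
  assumes "computable X k f" "computable X k g"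
  shows "computable X k (\<lambda>xs. if f xs \<in> set_decode (g xs) then 1 else 0)"
proof (rule computable_cong)
  show "computable X k (\<lambda>xs. (g xs div 2 ^ f xs) mod 2)"
    by (intro computable_mod2 computable_div_power2 assms)
qed (auto simp: set_decode_def odd_iff_mod_2_eq_one)

section \<open>Oracle programs\<close>

text \<open>The inductive predicate recfn only records which functions are computable.
  To vary the oracle of a fixed computation we need its program.\<close>

datatype prog =
  Zero | Succ | Proj nat | Oracle | Comp prog "prog list" | Prim_rec prog prog | Minimize prog

instance prog :: countable
  by countable_datatype

fun run :: "prog \<Rightarrow> (nat \<Rightarrow> bool) \<Rightarrow> nat list \<Rightarrow> nat option" where
  "run Zero Q xs = Some 0"
| "run Succ Q xs = Some (Suc (hd xs))"
| "run (Proj i) Q xs = Some (xs ! i)"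
| "run Oracle Q xs = Some (if Q (hd xs) then 1 else 0)"
| "run (Comp g fs) Q xs = (if \<forall>f\<in>set fs. run f Q xs \<noteq> None
      then run g Q (map (\<lambda>f. the (run f Q xs)) fs) else None)"
| "run (Prim_rec g h) Q ys = prec_aux (run g Q) (run h Q) (hd ys) (tl ys)"
| "run (Minimize f) Q xs = mu_op (run f Q) xs"

inductive wf_prog :: "nat \<Rightarrow> prog \<Rightarrow> bool" where
  wf_Zero: "wf_prog k Zero"
| wf_Succ: "wf_prog (Suc 0) Succ"
| wf_Proj: "i < k \<Longrightarrow> wf_prog k (Proj i)"
| wf_Oracle: "wf_prog (Suc 0) Oracle"
| wf_Comp: "wf_prog m g \<Longrightarrow> length fs = m \<Longrightarrow> \<forall>f\<in>set fs. wf_prog k f \<Longrightarrow> wf_prog k (Comp g fs)"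
| wf_Prim_rec: "wf_prog k g \<Longrightarrow> wf_prog (Suc (Suc k)) h \<Longrightarrow> wf_prog (Suc k) (Prim_rec g h)"
| wf_Minimize: "wf_prog (Suc k) f \<Longrightarrow> wf_prog k (Minimize f)"

lemma recfn_imp_prog: "recfn X k f \<Longrightarrow> \<exists>p. wf_prog k p \<and> f = run p (\<lambda>y. y \<in> X)"
proof (induction rule: recfn.induct)
  case (compose m g fs k)
  obtain pg where pg: "wf_prog m pg" "g = run pg (\<lambda>y. y \<in> X)"
    using compose.IH by blast
  obtain P where P: "\<And>f. f \<in> set fs \<Longrightarrow> wf_prog k (P f) \<and> f = run (P f) (\<lambda>y. y \<in> X)"
    using bchoice[of "set fs" "\<lambda>f p. wf_prog k p \<and> f = run p (\<lambda>y. y \<in> X)"] compose.IH by blast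
  define ps where "ps = map P fs"
  have fs: "fs = map (\<lambda>p. run p (\<lambda>y. y \<in> X)) ps"
    unfolding ps_def using P by (simp add: map_idI)
  show ?case
  proof (intro exI conjI)
    show "wf_prog k (Comp pg ps)"
      unfolding ps_def by (rule wf_Comp[OF pg(1)]) (use P compose.hyps(2) in auto)
    show "(\<lambda>xs. if \<forall>f\<in>set fs. f xs \<noteq> None then g (map (\<lambda>f. the (f xs)) fs) else None) =
      run (Comp pg ps) (\<lambda>y. y \<in> X)"
      unfolding fs pg(2) by (rule ext) (auto simp: comp_def)
  qed
next
  case (zero k) show ?case by (intro exI[of _ Zero]) (auto intro: wf_prog.intros)
next
  case succ show ?case by (auto intro!: exI[of _ Succ] wf_Succ)
next
  case (proj i k) then show ?case by (intro exI[of _ "Proj i"]) (auto intro: wf_prog.intros)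
next
  case orac show ?case by (auto intro!: exI[of _ Oracle] wf_Oracle)
next
  case (prim_rec k g h)
  then obtain pg ph where "wf_prog k pg" "g = run pg (\<lambda>y. y \<in> X)"
    "wf_prog (Suc (Suc k)) ph" "h = run ph (\<lambda>y. y \<in> X)" by blast
  then show ?case by (intro exI[of _ "Prim_rec pg ph"]) (auto intro: wf_prog.intros)
next
  case (mu k f)
  then obtain pf where "wf_prog (Suc k) pf" "f = run pf (\<lambda>y. y \<in> X)" by blast
  then show ?case by (intro exI[of _ "Minimize pf"]) (auto intro: wf_prog.intros)
qed

lemma mu_op_eq_SomeI:
  assumes "f (n # xs) = Some 0" "\<And>m. m < n \<Longrightarrow> \<exists>w. f (m # xs) = Some (Suc w)"
  shows "mu_op f xs = Some n"
proof -
  let ?P = "\<lambda>n. f (n # xs) = Some 0 \<and> (\<forall>m<n. f (m # xs) \<noteq> None)"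
  have P: "?P n" using assms by fastforce
  have "(LEAST n. ?P n) = n"
  proof (rule Least_equality[where P="?P", OF P])
    show "n \<le> y" if "?P y" for y
      using that assms(2)[of y] by (cases "y < n") auto
  qed
  moreover have "\<exists>n. ?P n" using P by blast
  ultimately show ?thesis unfolding mu_op_def by (simp only: if_True)
qed

lemma mu_op_eq_SomeD:
  assumes "mu_op f xs = Some n"
  shows "f (n # xs) = Some 0 \<and> (\<forall>m<n. \<exists>w. f (m # xs) = Some (Suc w))"
proof -
  let ?P = "\<lambda>n. f (n # xs) = Some 0 \<and> (\<forall>m<n. f (m # xs) \<noteq> None)"
  have ex: "\<exists>n. ?P n"
  proof (rule ccontr)
    assume "\<not> (\<exists>n. ?P n)"
    then have "mu_op f xs = None" unfolding mu_op_def by (simp only: if_False)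
    then show False using assms by simp
  qed
  then have "mu_op f xs = Some (LEAST n. ?P n)" unfolding mu_op_def by (simp only: if_True)
  then have n: "n = (LEAST n. ?P n)" using assms by (simp only: option.inject)
  have P: "?P n" using LeastI_ex[OF ex] unfolding n[symmetric] .
  have "\<exists>w. f (m # xs) = Some (Suc w)" if "m < n" for m
  proof -
    have "f (m # xs) \<noteq> Some 0"
    proof
      assume "f (m # xs) = Some 0"
      then have "n \<le> m" using P that Least_le[of ?P m] unfolding n[symmetric] by auto
      then show False using that by simp
    qed
    moreover have "f (m # xs) \<noteq> None" using P that by auto
    ultimately show ?thesis by (cases "f (m # xs)") (auto simp: gr0_conv_Suc)
  qed
  then show ?thesis using P by blast
qed

lemma mu_op_neq_None_iff:
  assumes "\<And>n. f (n # xs) \<noteq> None"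
  shows "mu_op f xs \<noteq> None \<longleftrightarrow> (\<exists>n. f (n # xs) = Some 0)"
proof
  assume "mu_op f xs \<noteq> None"
  then obtain n where "mu_op f xs = Some n" by auto
  then show "\<exists>n. f (n # xs) = Some 0" using mu_op_eq_SomeD by blast
next
  assume "\<exists>n. f (n # xs) = Some 0"
  then have "\<exists>n. f (n # xs) = Some 0 \<and> (\<forall>m<n. f (m # xs) \<noteq> None)"
    using assms by blast
  then show "mu_op f xs \<noteq> None" unfolding mu_op_def by (simp only: if_True) simp
qed

lemma run_use:
  "run p Q xs = Some v \<Longrightarrow> \<exists>l. \<forall>Q'. (\<forall>y<l. Q' y = Q y) \<longrightarrow> run p Q' xs = Some v"
proof (induction p arbitrary: xs v)
  case Oracle
  show ?case by (rule exI[of _ "Suc (hd xs)"]) (use Oracle in auto)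
next
  case (Comp g fs)
  have all: "\<forall>f\<in>set fs. run f Q xs \<noteq> None"
    and gv: "run g Q (map (\<lambda>f. the (run f Q xs)) fs) = Some v"
    using Comp.prems by (auto split: if_splits)
  have "\<forall>f\<in>set fs. \<exists>l. \<forall>Q'. (\<forall>y<l. Q' y = Q y) \<longrightarrow> run f Q' xs = run f Q xs"
    using Comp.IH(2) all by fastforce
  then obtain L where L: "\<And>f Q'. f \<in> set fs \<Longrightarrow> \<forall>y<L f. Q' y = Q y \<Longrightarrow> run f Q' xs = run f Q xs"
    by metis
  obtain lg where lg: "\<And>Q'. \<forall>y<lg. Q' y = Q y \<Longrightarrow> run g Q' (map (\<lambda>f. the (run f Q xs)) fs) = Some v"
    using Comp.IH(1)[OF gv] by blast
  define l where "l = lg + sum_list (map L fs)"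
  have "run (Comp g fs) Q' xs = Some v" if agree: "\<forall>y<l. Q' y = Q y" for Q'
  proof -
    have le: "f \<in> set fs \<Longrightarrow> L f \<le> l" for f
      unfolding l_def using member_le_sum_list[of "L f" "map L fs"] by simp
    have "f \<in> set fs \<Longrightarrow> run f Q' xs = run f Q xs" for f
      using L[of f Q'] le[of f] agree by auto
    moreover have "run g Q' (map (\<lambda>f. the (run f Q xs)) fs) = Some v"
      using lg agree unfolding l_def by simp
    ultimately show ?thesis using all by (simp cong: map_cong)
  qed
  then show ?case by blast
next
  case (Prim_rec g h)
  have "prec_aux (run g Q) (run h Q) n ys = Some r \<Longrightarrow>
      \<exists>l. \<forall>Q'. (\<forall>y<l. Q' y = Q y) \<longrightarrow> prec_aux (run g Q') (run h Q') n ys = Some r" for n ys r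
  proof (induction n arbitrary: r)
    case (Suc n)
    then obtain r0 where r0: "prec_aux (run g Q) (run h Q) n ys = Some r0"
      "run h Q (n # r0 # ys) = Some r"
      by (auto split: option.splits)
    obtain l1 where "\<And>Q'. \<forall>y<l1. Q' y = Q y \<Longrightarrow> prec_aux (run g Q') (run h Q') n ys = Some r0"
      using Suc.IH[OF r0(1)] by blast
    moreover obtain l2 where "\<And>Q'. \<forall>y<l2. Q' y = Q y \<Longrightarrow> run h Q' (n # r0 # ys) = Some r"
      using Prim_rec.IH(2)[OF r0(2)] by blast
    ultimately show ?case by (intro exI[of _ "l1 + l2"]) auto
  qed (use Prim_rec.IH(1) in simp)
  then show ?case using Prim_rec.prems by simp
next
  case (Minimize f)
  have v: "run f Q (v # xs) = Some 0 \<and> (\<forall>m<v. \<exists>w. run f Q (m # xs) = Some (Suc w))"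
    using mu_op_eq_SomeD[of "run f Q" xs v] Minimize.prems by simp
  have "\<forall>m\<le>v. \<exists>l. \<forall>Q'. (\<forall>y<l. Q' y = Q y) \<longrightarrow> run f Q' (m # xs) = run f Q (m # xs)"
  proof (intro allI impI)
    fix m assume "m \<le> v"
    then obtain w where "run f Q (m # xs) = Some w"
      using v by (cases "m = v") (auto simp: order_le_less)
    then show "\<exists>l. \<forall>Q'. (\<forall>y<l. Q' y = Q y) \<longrightarrow> run f Q' (m # xs) = run f Q (m # xs)"
      using Minimize.IH by metis
  qed
  then obtain L where L: "\<And>m Q'. m \<le> v \<Longrightarrow> \<forall>y<L m. Q' y = Q y \<Longrightarrow> run f Q' (m # xs) = run f Q (m # xs)"
    by metis
  define l where "l = (\<Sum>m\<le>v. L m)"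
  have "run (Minimize f) Q' xs = Some v" if agree: "\<forall>y<l. Q' y = Q y" for Q'
  proof -
    have le: "m \<le> v \<Longrightarrow> L m \<le> l" for m
      unfolding l_def by (rule member_le_sum) auto
    have "m \<le> v \<Longrightarrow> run f Q' (m # xs) = run f Q (m # xs)" for m
      using L[of m Q'] le[of m] agree by auto
    then have "mu_op (run f Q') xs = Some v"
      using v by (intro mu_op_eq_SomeI) auto
    then show ?thesis by simp
  qed
  then show ?case by blast
qed auto

section \<open>Stage approximations of oracle computations\<close>

text \<open>H (t # xs @ [e]) is the guess at stage t for the output of p on xs relative to the
  oracle Oe e: 0 means no output yet and Suc v means output v. Guesses are never wrong
  and eventually right.\<close>

definition approximates :: "(nat \<Rightarrow> nat \<Rightarrow> bool) \<Rightarrow> nat \<Rightarrow> prog \<Rightarrow> (nat list \<Rightarrow> nat) \<Rightarrow> bool" where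
  "approximates Oe k p H \<longleftrightarrow>
    (\<forall>xs e t v. length xs = k \<longrightarrow> H (t # xs @ [e]) = Suc v \<longrightarrow> run p (Oe e) xs = Some v) \<and>
    (\<forall>xs e v. length xs = k \<longrightarrow> run p (Oe e) xs = Some v \<longrightarrow> (\<exists>t0. \<forall>t\<ge>t0. H (t # xs @ [e]) = Suc v))"

lemma approximatesI:
  assumes "\<And>xs e t v. length xs = k \<Longrightarrow> H (t # xs @ [e]) = Suc v \<Longrightarrow> run p (Oe e) xs = Some v"
    and "\<And>xs e v. length xs = k \<Longrightarrow> run p (Oe e) xs = Some v \<Longrightarrow> \<exists>t0. \<forall>t\<ge>t0. H (t # xs @ [e]) = Suc v"
  shows "approximates Oe k p H"
  using assms unfolding approximates_def by blast

lemma approximates_sound: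
  "approximates Oe k p H \<Longrightarrow> length xs = k \<Longrightarrow> H (t # xs @ [e]) = Suc v \<Longrightarrow> run p (Oe e) xs = Some v"
  unfolding approximates_def by blast

lemma approximates_complete:
  "approximates Oe k p H \<Longrightarrow> length xs = k \<Longrightarrow> run p (Oe e) xs = Some v \<Longrightarrow>
   \<exists>t0. \<forall>t\<ge>t0. H (t # xs @ [e]) = Suc v"
  unfolding approximates_def by blast

lemma eventually_ball_finite_sequentially:
  fixes P :: "'a \<Rightarrow> nat \<Rightarrow> bool"
  assumes "\<And>i. i \<in> I \<Longrightarrow> \<exists>t0. \<forall>t\<ge>t0. P i t" and "finite I"
  shows "\<exists>t0. \<forall>t\<ge>t0. \<forall>i\<in>I. P i t"
  using eventually_ball_finite[OF assms(2), of "\<lambda>t i. P i t" sequentially] assms(1)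
  unfolding eventually_sequentially by blast

definition approx_comp :: "(nat list \<Rightarrow> nat) \<Rightarrow> (nat list \<Rightarrow> nat) list \<Rightarrow> nat list \<Rightarrow> nat" where
  "approx_comp Hg Hs ys =
     (if \<exists>H\<in>set Hs. H ys = 0 then 0 else Hg (hd ys # map (\<lambda>H. H ys - 1) Hs @ [last ys]))"

lemma computable_approx_comp:
  assumes Hg: "computable C (Suc (Suc m)) Hg" and len: "length Hs = m"
    and Hs: "\<forall>H\<in>set Hs. computable C (Suc (Suc k)) H"
  shows "computable C (Suc (Suc k)) (approx_comp Hg Hs)"
proof (rule computable_cong)
  let ?signs = "map (\<lambda>H ys. if H ys = 0 then 0 else 1::nat) Hs"
  let ?args = "(\<lambda>ys::nat list. ys ! 0) # map (\<lambda>H ys. H ys - 1) Hs @ [\<lambda>ys. ys ! Suc k]"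
  have c: "computable C (Suc (Suc k)) (\<lambda>ys. prod_list (map (\<lambda>f. f ys) ?signs))"
    using Hs by (intro computable_prod_list) (auto intro: computable_sgn)
  have b: "computable C (Suc (Suc k)) (\<lambda>ys. Hg (map (\<lambda>f. f ys) ?args))"
    using Hs len by (intro computable_comp[OF Hg])
      (auto intro: computable_proj computable_diff computable_const)
  show "computable C (Suc (Suc k)) (\<lambda>ys.
      if prod_list (map (\<lambda>f. f ys) ?signs) = 0 then 0 else Hg (map (\<lambda>f. f ys) ?args))"
    by (rule computable_if_zero[OF c computable_const b])
  show "(if prod_list (map (\<lambda>f. f ys) ?signs) = 0 then 0 else Hg (map (\<lambda>f. f ys) ?args))
        = approx_comp Hg Hs ys" if "length ys = Suc (Suc k)" for ys
  proof -
    have "ys \<noteq> []" using that by auto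
    then show ?thesis
      using that
      by (auto simp: approx_comp_def prod_list_zero_iff hd_conv_nth last_conv_nth comp_def)
  qed
qed

lemma approximates_Comp:
  assumes g: "approximates Oe m g Hg" and len: "length fs = m"
    and fs: "\<And>f. f \<in> set fs \<Longrightarrow> approximates Oe k f (HF f)"
  shows "approximates Oe k (Comp g fs) (approx_comp Hg (map HF fs))"
proof (rule approximatesI)
  fix xs e t v
  assume l: "length xs = k" and H: "approx_comp Hg (map HF fs) (t # xs @ [e]) = Suc v"
  let ?ys = "t # xs @ [e]"
  have nz: "\<forall>f\<in>set fs. HF f ?ys \<noteq> 0"
    and hg: "Hg (t # map (\<lambda>f. HF f ?ys - 1) fs @ [e]) = Suc v"
    using H by (auto simp: approx_comp_def comp_def split: if_splits)
  have f: "run f (Oe e) xs = Some (HF f ?ys - 1)" if "f \<in> set fs" for f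
    using approximates_sound[OF fs[OF that] l, of t e "HF f ?ys - 1"] nz that by simp
  then have vals: "map (\<lambda>f. the (run f (Oe e) xs)) fs = map (\<lambda>f. HF f ?ys - 1) fs"
    by simp
  show "run (Comp g fs) (Oe e) xs = Some v"
    using approximates_sound[OF g _ hg] f len by (simp add: vals)
next
  fix xs e v
  assume l: "length xs = k" and r: "run (Comp g fs) (Oe e) xs = Some v"
  let ?vals = "map (\<lambda>f. the (run f (Oe e) xs)) fs"
  have all: "\<forall>f\<in>set fs. run f (Oe e) xs \<noteq> None"
    using r by (auto split: if_splits)
  then have "run g (Oe e) ?vals = Some v"
    using r by simp
  then obtain t1 where t1: "\<forall>t\<ge>t1. Hg (t # ?vals @ [e]) = Suc v"
    using approximates_complete[OF g] len by fastforce
  have "\<exists>t0. \<forall>t\<ge>t0. \<forall>f\<in>set fs. HF f (t # xs @ [e]) = Suc (the (run f (Oe e) xs))"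
    using approximates_complete[OF fs l] all by (intro eventually_ball_finite_sequentially) auto
  then obtain t2 where t2: "\<forall>t\<ge>t2. \<forall>f\<in>set fs. HF f (t # xs @ [e]) = Suc (the (run f (Oe e) xs))"
    by blast
  have "approx_comp Hg (map HF fs) (t # xs @ [e]) = Suc v" if "t \<ge> max t1 t2" for t
  proof -
    have "\<forall>f\<in>set fs. HF f (t # xs @ [e]) \<noteq> 0"
      using t2 that by simp
    then have "approx_comp Hg (map HF fs) (t # xs @ [e])
        = Hg (t # map (\<lambda>f. HF f (t # xs @ [e]) - 1) fs @ [e])"
      by (auto simp: approx_comp_def comp_def)
    also have "map (\<lambda>f. HF f (t # xs @ [e]) - 1) fs = ?vals"
      using t2 that by simp
    also have "Hg (t # ?vals @ [e]) = Suc v"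
      using t1 that by simp
    finally show ?thesis .
  qed
  then show "\<exists>t0. \<forall>t\<ge>t0. approx_comp Hg (map HF fs) (t # xs @ [e]) = Suc v"
    by blast
qed

fun approx_rec :: "(nat list \<Rightarrow> nat) \<Rightarrow> (nat list \<Rightarrow> nat) \<Rightarrow> nat \<Rightarrow> nat \<Rightarrow> nat list \<Rightarrow> nat" where
  "approx_rec Hg Hh t 0 zs = Hg (t # zs)"
| "approx_rec Hg Hh t (Suc j) zs =
     (case approx_rec Hg Hh t j zs of 0 \<Rightarrow> 0 | Suc w \<Rightarrow> Hh (t # j # w # zs))"

definition approx_prim_rec :: "(nat list \<Rightarrow> nat) \<Rightarrow> (nat list \<Rightarrow> nat) \<Rightarrow> nat list \<Rightarrow> nat" where
  "approx_prim_rec Hg Hh ys = approx_rec Hg Hh (ys ! 0) (ys ! 1) (drop 2 ys)"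

lemma computable_approx_prim_rec:
  assumes Hg: "computable C (Suc (Suc k)) Hg" and Hh: "computable C (Suc (Suc (Suc (Suc k)))) Hh"
  shows "computable C (Suc (Suc (Suc k))) (approx_prim_rec Hg Hh)"
proof (rule computable_prim_recursion_at)
  define g where "g = (\<lambda>ys::nat list. Hg (ys ! 0 # drop 2 ys))"
  define h where "h = (\<lambda>zs::nat list.
    if zs ! 1 = 0 then 0 else Hh (zs ! 2 # zs ! 0 # (zs ! 1 - 1) # drop 4 zs))"
  have "prim_recursion g h j ys = approx_rec Hg Hh (ys ! 0) j (drop 2 ys)" for j ys
    by (induction j) (auto simp: g_def h_def split: nat.split)
  then show "approx_prim_rec Hg Hh ys = prim_recursion g h (ys ! 1) ys" for ys
    by (simp add: approx_prim_rec_def)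
  show "computable C (Suc (Suc (Suc k))) (\<lambda>ys. ys ! 1)"
    by (rule computable_proj) simp
  show "computable C (Suc (Suc (Suc k))) g"
    using computable_select_drop[where idxs="[0]" and n=2 and k="Suc (Suc (Suc k))"] Hg
    by (simp add: g_def)
  let ?args = "[\<lambda>zs::nat list. zs ! 2, \<lambda>zs. zs ! 0, \<lambda>zs. zs ! 1 - 1] @
               map (\<lambda>i zs. zs ! i) [4..<Suc (Suc (Suc (Suc (Suc k))))]"
  have "computable C (Suc (Suc (Suc (Suc (Suc k))))) (\<lambda>zs. Hh (map (\<lambda>f. f zs) ?args))"
    by (rule computable_comp[OF Hh]) (auto intro: computable_proj computable_diff computable_const)
  then have "computable C (Suc (Suc (Suc (Suc (Suc k)))))
      (\<lambda>zs. if zs ! 1 = 0 then 0 else Hh (map (\<lambda>f. f zs) ?args))"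
    by (intro computable_if_zero computable_proj computable_const) simp
  then show "computable C (Suc (Suc (Suc (Suc (Suc k))))) h"
  proof (rule computable_cong)
    fix zs :: "nat list" assume "length zs = Suc (Suc (Suc (Suc (Suc k))))"
    then show "(if zs ! 1 = 0 then 0 else Hh (map (\<lambda>f. f zs) ?args)) = h zs"
      using map_nth_upt_drop[of zs 4] by (simp add: h_def comp_def)
  qed
qed

lemma approx_rec_sound:
  assumes g: "approximates Oe k g Hg" and h: "approximates Oe (Suc (Suc k)) h Hh"
    and l: "length xs = k"
  shows "approx_rec Hg Hh t j (xs @ [e]) = Suc v \<Longrightarrow>
    prec_aux (run g (Oe e)) (run h (Oe e)) j xs = Some v"
proof (induction j arbitrary: v)
  case 0
  then show ?case using approximates_sound[OF g l] by simp
next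
  case (Suc j)
  then obtain w where w: "approx_rec Hg Hh t j (xs @ [e]) = Suc w"
    and "Hh (t # (j # w # xs) @ [e]) = Suc v"
    by (auto split: nat.splits)
  then have "run h (Oe e) (j # w # xs) = Some v"
    using approximates_sound[OF h] l by simp
  then show ?case using Suc.IH[OF w] by simp
qed

lemma approx_rec_complete:
  assumes g: "approximates Oe k g Hg" and h: "approximates Oe (Suc (Suc k)) h Hh"
    and l: "length xs = k"
  shows "prec_aux (run g (Oe e)) (run h (Oe e)) j xs = Some v \<Longrightarrow>
    \<exists>t0. \<forall>t\<ge>t0. approx_rec Hg Hh t j (xs @ [e]) = Suc v"
proof (induction j arbitrary: v)
  case 0
  then show ?case using approximates_complete[OF g l] by simp
next
  case (Suc j)
  then obtain w where w: "prec_aux (run g (Oe e)) (run h (Oe e)) j xs = Some w"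
    and hv: "run h (Oe e) (j # w # xs) = Some v"
    by (auto split: option.splits)
  have "\<exists>t0. \<forall>t\<ge>t0. Hh (t # (j # w # xs) @ [e]) = Suc v"
    using approximates_complete[OF h _ hv] l by simp
  then obtain t2 where t2: "\<forall>t\<ge>t2. Hh (t # j # w # xs @ [e]) = Suc v"
    by auto
  obtain t1 where "\<forall>t\<ge>t1. approx_rec Hg Hh t j (xs @ [e]) = Suc w"
    using Suc.IH[OF w] by blast
  then show ?case using t2 by (intro exI[of _ "max t1 t2"]) simp
qed

lemma approximates_Prim_rec:
  assumes "approximates Oe k g Hg" "approximates Oe (Suc (Suc k)) h Hh"
  shows "approximates Oe (Suc k) (Prim_rec g h) (approx_prim_rec Hg Hh)"
proof (rule approximatesI)
  fix xs :: "nat list" and e t v :: nat assume "length xs = Suc k"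
  then obtain n xs' where xs: "xs = n # xs'" "length xs' = k" by (cases xs) auto
  then show "approx_prim_rec Hg Hh (t # xs @ [e]) = Suc v \<Longrightarrow> run (Prim_rec g h) (Oe e) xs = Some v"
    using approx_rec_sound[OF assms] by (simp add: approx_prim_rec_def)
next
  fix xs :: "nat list" and e v :: nat assume "length xs = Suc k"
  then obtain n xs' where xs: "xs = n # xs'" "length xs' = k" by (cases xs) auto
  then show "run (Prim_rec g h) (Oe e) xs = Some v \<Longrightarrow>
      \<exists>t0. \<forall>t\<ge>t0. approx_prim_rec Hg Hh (t # xs @ [e]) = Suc v"
    using approx_rec_complete[OF assms] by (simp add: approx_prim_rec_def)
qed

text \<open>mu_search w b scans w 0, ..., w (b - 1) for the first entry that is at most 1. The result is
  0 if there is none, 1 if that entry is 0, and n + 2 if it is w n = 1. With w m the current guess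
  Suc (f m) for f m, entries at least 2 mean f m > 0, 1 means f m = 0, and 0 means f m is not yet
  known, which blocks the search.\<close>

fun mu_search :: "(nat \<Rightarrow> nat) \<Rightarrow> nat \<Rightarrow> nat" where
  "mu_search w 0 = 0"
| "mu_search w (Suc b) = (if mu_search w b \<noteq> 0 then mu_search w b
     else if w b = 0 then 1 else if w b = 1 then b + 2 else 0)"

lemma mu_search_eq_0_iff: "mu_search w b = 0 \<longleftrightarrow> (\<forall>m<b. 2 \<le> w m)"
  by (induction b) (auto simp: less_Suc_eq)

lemma mu_search_eq_Suc_SucD:
  "mu_search w b = Suc (Suc n) \<Longrightarrow> n < b \<and> w n = 1 \<and> (\<forall>m<n. 2 \<le> w m)"
  by (induction b) (auto simp: mu_search_eq_0_iff split: if_splits)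

lemma mu_search_eq_Suc_SucI:
  "w n = 1 \<Longrightarrow> \<forall>m<n. 2 \<le> w m \<Longrightarrow> n < b \<Longrightarrow> mu_search w b = Suc (Suc n)"
  by (induction b) (auto simp: mu_search_eq_0_iff less_Suc_eq)

definition approx_minimize :: "(nat list \<Rightarrow> nat) \<Rightarrow> nat list \<Rightarrow> nat" where
  "approx_minimize Hf ys = mu_search (\<lambda>m. Hf (ys ! 0 # m # tl ys)) (ys ! 0) - 1"

lemma computable_approx_minimize:
  assumes Hf: "computable C (Suc (Suc (Suc k))) Hf"
  shows "computable C (Suc (Suc k)) (approx_minimize Hf)"
proof (rule computable_diff[OF _ computable_const, of _ _ _ 1, THEN computable_cong])
  define V where "V = (\<lambda>zs::nat list. Hf (zs ! 2 # zs ! 0 # drop 3 zs))"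
  define h where "h = (\<lambda>zs::nat list. if zs ! 1 = 0
      then (if V zs = 0 then 1 else if V zs - 1 = 0 then zs ! 0 + 2 else 0) else zs ! 1)"
  have rec: "prim_recursion (\<lambda>_. 0) h b ys = mu_search (\<lambda>m. Hf (ys ! 0 # m # tl ys)) b" for b ys
    by (induction b) (auto simp: h_def V_def drop_Suc)
  have "computable C (Suc (Suc (Suc (Suc k)))) V"
    using computable_select_drop[where idxs="[2, 0]" and n=3 and k="Suc (Suc (Suc (Suc k)))"] Hf
    by (simp add: V_def)
  then have hc: "computable C (Suc (Suc (Suc (Suc k)))) h"
    unfolding h_def
    by (intro computable_if_zero computable_proj computable_const computable_diff computable_add)
      simp_all
  show "computable C (Suc (Suc k)) (\<lambda>ys. prim_recursion (\<lambda>_. 0) h (ys ! 0) ys)"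
    by (rule computable_prim_recursion_at[where g="\<lambda>_. 0" and h=h and a="\<lambda>ys. ys ! 0"])
      (simp_all add: computable_proj computable_const hc)
  show "prim_recursion (\<lambda>_. 0) h (ys ! 0) ys - 1 = approx_minimize Hf ys" for ys
    by (simp add: rec approx_minimize_def)
qed

lemma approximates_Minimize:
  assumes f: "approximates Oe (Suc k) f Hf"
  shows "approximates Oe k (Minimize f) (approx_minimize Hf)"
proof (rule approximatesI)
  fix xs :: "nat list" and e t v :: nat
  assume l: "length xs = k" and H: "approx_minimize Hf (t # xs @ [e]) = Suc v"
  let ?w = "\<lambda>m. Hf (t # m # xs @ [e])"
  have "mu_search ?w t = Suc (Suc v)"
    using H by (simp add: approx_minimize_def)
  then have w: "?w v = 1" "\<And>m. m < v \<Longrightarrow> 2 \<le> ?w m"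
    using mu_search_eq_Suc_SucD by blast+
  have "run f (Oe e) (v # xs) = Some 0"
    using approximates_sound[OF f, of "v # xs" t e 0] w(1) l by simp
  moreover have "\<exists>u. run f (Oe e) (m # xs) = Some (Suc u)" if m: "m < v" for m
  proof -
    obtain u where u: "?w m = 2 + u"
      using le_Suc_ex[OF w(2)[OF m]] by blast
    then show ?thesis
      using approximates_sound[OF f, of "m # xs" t e "Suc u"] l by auto
  qed
  ultimately have "mu_op (run f (Oe e)) xs = Some v"
    by (rule mu_op_eq_SomeI)
  then show "run (Minimize f) (Oe e) xs = Some v"
    by simp
next
  fix xs :: "nat list" and e v :: nat
  assume l: "length xs = k" and r: "run (Minimize f) (Oe e) xs = Some v"
  let ?w = "\<lambda>t m. Hf (t # m # xs @ [e])"
  have v: "run f (Oe e) (v # xs) = Some 0" "\<forall>m<v. \<exists>u. run f (Oe e) (m # xs) = Some (Suc u)"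
    using mu_op_eq_SomeD[of "run f (Oe e)" xs v] r by simp_all
  have "\<exists>t0. \<forall>t\<ge>t0. \<forall>m\<in>{..v}. ?w t m = Suc (the (run f (Oe e) (m # xs)))"
  proof (rule eventually_ball_finite_sequentially)
    fix m assume "m \<in> {..v}"
    then obtain u where u: "run f (Oe e) (m # xs) = Some u"
      using v by (cases "m = v") (auto simp: order_le_less)
    show "\<exists>t0. \<forall>t\<ge>t0. ?w t m = Suc (the (run f (Oe e) (m # xs)))"
      using approximates_complete[OF f _ u] l u by simp
  qed simp
  then obtain t0 where t0: "\<forall>t\<ge>t0. \<forall>m\<in>{..v}. ?w t m = Suc (the (run f (Oe e) (m # xs)))"
    by blast
  have "mu_search (?w t) t = Suc (Suc v)" if t: "t \<ge> max t0 (Suc v)" for t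
  proof (rule mu_search_eq_Suc_SucI)
    show "?w t v = 1" using t0 v(1) t by simp
    show "\<forall>m<v. 2 \<le> ?w t m"
    proof (intro allI impI)
      fix m assume "m < v"
      then obtain u where "run f (Oe e) (m # xs) = Some (Suc u)" using v(2) by blast
      then show "2 \<le> ?w t m" using t0 t \<open>m < v\<close> by simp
    qed
    show "v < t" using t by simp
  qed
  then have "\<forall>t\<ge>max t0 (Suc v). approx_minimize Hf (t # xs @ [e]) = Suc v"
    by (simp add: approx_minimize_def)
  then show "\<exists>t0. \<forall>t\<ge>t0. approx_minimize Hf (t # xs @ [e]) = Suc v"
    by blast
qed

lemma computable_count_nonzero:
  assumes H: "computable C 3 H"
  shows "computable C 2 (\<lambda>ys. \<Sum>e<Suc (ys ! 0). if H [ys ! 0, ys ! 1, e] = 0 then 0 else 1)"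
proof (rule computable_prim_recursion_at[where a="\<lambda>ys. Suc (ys ! 0)"])
  let ?h = "\<lambda>zs. zs ! 1 + (if H [zs ! 2, zs ! 3, zs ! 0] = 0 then 0 else 1)"
  have rec: "prim_recursion (\<lambda>_. 0) ?h n ys = (\<Sum>e<n. if H [ys ! 0, ys ! 1, e] = 0 then 0 else 1)"
    for n ys
    by (induction n) auto
  show "(\<Sum>e<Suc (ys ! 0). if H [ys ! 0, ys ! 1, e] = 0 then 0 else 1) =
      prim_recursion (\<lambda>_. 0) ?h (Suc (ys ! 0)) ys" for ys
    by (simp only: rec)
  have "computable C 4 (\<lambda>zs. H [zs ! 2, zs ! 3, zs ! 0])"
    by (rule computable_comp_eq[where fs="[\<lambda>zs. zs ! 2, \<lambda>zs. zs ! 3, \<lambda>zs. zs ! 0]", OF H])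
      (auto intro: computable_proj)
  then show "computable C (Suc (Suc 2)) ?h"
    by (intro computable_add computable_proj computable_sgn) simp_all
qed (intro computable_const computable_unop[OF computable_Suc] computable_proj | simp)+

lemma ce_in_search:
  assumes "computable C 2 q"
  shows "ce_in C {c. \<exists>z. q [z, c] \<noteq> 0}"
proof -
  obtain g where g: "recfn C 2 g" "\<And>ys. length ys = 2 \<Longrightarrow> g ys = Some (1 - q ys)"
    using computable_diff[OF computable_const assms, of 1] unfolding computable_def by blast
  have "recfn C 1 (mu_op g)"
    using recfn.mu[of C 1 g] g(1) by (simp add: numeral_2_eq_2)
  moreover have "mu_op g [c] \<noteq> None \<longleftrightarrow> (\<exists>z. q [z, c] \<noteq> 0)" for c
  proof -
    have "g (z # [c]) \<noteq> None" for z
      using g(2) by simp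
    then show ?thesis
      using mu_op_neq_None_iff[of g "[c]"] g(2) by (simp add: Suc_le_eq)
  qed
  ultimately show ?thesis
    unfolding ce_in_def by blast
qed

context
  fixes C :: "nat set" and Oe :: "nat \<Rightarrow> nat \<Rightarrow> bool"
  assumes computable_oracles: "computable C 2 (\<lambda>xs. if Oe (xs ! 1) (xs ! 0) then 1 else 0)"
begin

lemma wf_prog_approximable: "wf_prog k p \<Longrightarrow> \<exists>H. computable C (Suc (Suc k)) H \<and> approximates Oe k p H"
proof (induction rule: wf_prog.induct)
  case (wf_Zero k)
  show ?case
    by (rule exI[of _ "\<lambda>_. 1"]) (auto intro: computable_const approximatesI)
next
  case wf_Succ
  have "computable C 3 (\<lambda>ys. 2 + ys ! 1)"
    by (intro computable_add computable_const computable_proj) simp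
  then show ?case
    by (intro exI[of _ "\<lambda>ys. 2 + ys ! 1"])
      (auto simp: numeral_3_eq_3 length_Suc_conv intro!: approximatesI)
next
  case (wf_Proj i k)
  have "computable C (Suc (Suc k)) (\<lambda>ys. 1 + ys ! Suc i)"
    using wf_Proj by (intro computable_add computable_const computable_proj) simp
  then show ?case
    using wf_Proj by (intro exI[of _ "\<lambda>ys. 1 + ys ! Suc i"])
      (auto simp: nth_append intro!: approximatesI)
next
  case wf_Oracle
  have "computable C 3 (\<lambda>ys. (\<lambda>xs. if Oe (xs ! 1) (xs ! 0) then 1 else 0) [ys ! 1, ys ! 2])"
    by (rule computable_comp2[OF computable_oracles]; rule computable_proj; simp)
  then have "computable C 3 (\<lambda>ys. 1 + (if Oe (ys ! 2) (ys ! 1) then 1 else 0))"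
    by (intro computable_add computable_const) simp
  then show ?case
    by (intro exI[of _ "\<lambda>ys. 1 + (if Oe (ys ! 2) (ys ! 1) then 1 else 0)"])
      (auto simp: numeral_3_eq_3 numeral_2_eq_2 length_Suc_conv intro!: approximatesI)
next
  case (wf_Comp m g fs k)
  obtain Hg where Hg: "computable C (Suc (Suc m)) Hg" "approximates Oe m g Hg"
    using wf_Comp.IH by blast
  obtain HF where HF: "\<And>f. f \<in> set fs \<Longrightarrow>
      computable C (Suc (Suc k)) (HF f) \<and> approximates Oe k f (HF f)"
    using bchoice[of "set fs" "\<lambda>f H. computable C (Suc (Suc k)) H \<and> approximates Oe k f H"]
      wf_Comp.IH by blast
  show ?case
    using HF wf_Comp.hyps(2)
    by (intro exI[of _ "approx_comp Hg (map HF fs)"] conjI computable_approx_comp[OF Hg(1)]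
        approximates_Comp[OF Hg(2)]) auto
next
  case (wf_Prim_rec k g h)
  then show ?case
    using computable_approx_prim_rec approximates_Prim_rec by blast
next
  case (wf_Minimize k f)
  then show ?case
    using computable_approx_minimize approximates_Minimize by blast
qed

lemma ce_in_halts_for_some_oracle:
  assumes "wf_prog 1 p"
  shows "ce_in C {c. \<exists>e. run p (Oe e) [c] \<noteq> None}"
proof -
  obtain H where H: "computable C 3 H" "approximates Oe 1 p H"
    using wf_prog_approximable[OF assms] by (auto simp: numeral_3_eq_3)
  define S where "S = (\<lambda>ys. \<Sum>e<Suc (ys ! 0). if H [ys ! 0, ys ! 1, e] = 0 then 0 else 1::nat)"
  have "computable C 2 S"
    unfolding S_def by (rule computable_count_nonzero[OF H(1)])
  moreover have "(\<exists>z. S [z, c] \<noteq> 0) \<longleftrightarrow> (\<exists>e. run p (Oe e) [c] \<noteq> None)" for c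
  proof
    assume "\<exists>z. S [z, c] \<noteq> 0"
    then obtain z e where "H [z, c, e] \<noteq> 0"
      unfolding S_def by (auto split: if_splits)
    then obtain v where "H (z # [c] @ [e]) = Suc v"
      by (cases "H [z, c, e]") auto
    then show "\<exists>e. run p (Oe e) [c] \<noteq> None"
      using approximates_sound[OF H(2), of "[c]" z e v] by auto
  next
    assume "\<exists>e. run p (Oe e) [c] \<noteq> None"
    then obtain e v where "run p (Oe e) [c] = Some v"
      by blast
    then obtain t0 where "\<forall>t\<ge>t0. H (t # [c] @ [e]) = Suc v"
      using approximates_complete[OF H(2), of "[c]" e v] by auto
    then have "H [t0 + e, c, e] \<noteq> 0"
      by simp
    then have "S [t0 + e, c] \<noteq> 0"
      unfolding S_def by (subst sum_nonneg_eq_0_iff) auto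
    then show "\<exists>z. S [z, c] \<noteq> 0"
      by blast
  qed
  ultimately show ?thesis
    using ce_in_search[of C S] by simp
qed

end

section \<open>Mathias conditions with computable reservoirs\<close>

definition computable_set :: "nat set \<Rightarrow> nat set \<Rightarrow> bool" where
  "computable_set C X \<longleftrightarrow> computable C 1 (\<lambda>xs. if xs ! 0 \<in> X then 1 else 0)"

lemma computable_member:
  "computable_set C X \<Longrightarrow> computable C k f \<Longrightarrow> computable C k (\<lambda>xs. if f xs \<in> X then 1 else 0)"
  unfolding computable_set_def using computable_unop[where op="\<lambda>x. if x \<in> X then 1 else 0"] by simp

lemma computable_set_UNIV: "computable_set C UNIV"
  unfolding computable_set_def using computable_const[of C 1 1] by simp

lemma computable_set_Int: "computable_set C X \<Longrightarrow> computable_set C Y \<Longrightarrow> computable_set C (X \<inter> Y)"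
  unfolding computable_set_def by (drule (1) computable_mult) (auto elim: computable_cong)

lemma computable_set_Compl: "computable_set C X \<Longrightarrow> computable_set C (- X)"
  unfolding computable_set_def
  by (drule computable_diff[OF computable_const, of _ _ _ 1]) (auto elim: computable_cong)

lemma computable_set_greaterThan: "computable_set C {b<..}"
proof -
  have "computable C 1 (\<lambda>xs. if xs ! 0 - b = 0 then 0 else 1)"
    by (intro computable_sgn computable_diff computable_proj computable_const) simp
  then show ?thesis
    unfolding computable_set_def by (rule computable_cong) auto
qed

lemma unif_computable_imp_computable_set:
  assumes "unif_computable C R"
  shows "computable_set C (R i)"
proof -
  obtain f where f: "recfn C 2 f" "\<And>i x. f [i, x] = Some (if x \<in> R i then 1 else 0)"
    using assms unfolding unif_computable_def by blast
  have "computable C 2 (\<lambda>xs. if xs ! 1 \<in> R (xs ! 0) then 1 else 0)"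
    unfolding computable_def
  proof (intro exI conjI allI impI, rule f(1))
    fix xs :: "nat list" assume "length xs = 2"
    then obtain a b where "xs = [a, b]" by (auto simp: numeral_2_eq_2 length_Suc_conv)
    then show "f xs = Some (if xs ! 1 \<in> R (xs ! 0) then 1 else 0)" using f(2) by simp
  qed
  then have "computable C 1 (\<lambda>xs. (\<lambda>ys. if ys ! 1 \<in> R (ys ! 0) then 1 else 0) [i, xs ! 0])"
    by (rule computable_comp2[OF _ computable_const computable_proj]) simp
  then show ?thesis
    unfolding computable_set_def by simp
qed

lemma join_iff: "y \<in> join G C \<longleftrightarrow> (if even y then y div 2 \<in> G else y div 2 \<in> C)"
  unfolding join_def by (auto elim: evenE oddE)

lemma run_join_use:
  assumes "run p (\<lambda>y. y \<in> join G C) xs = Some v"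
  obtains b where "\<And>G'. \<forall>x<b. x \<in> G' \<longleftrightarrow> x \<in> G \<Longrightarrow> run p (\<lambda>y. y \<in> join G' C) xs = Some v"
proof -
  obtain l where l: "\<And>Q'. \<forall>y<l. Q' y = (y \<in> join G C) \<Longrightarrow> run p Q' xs = Some v"
    using run_use[OF assms] by blast
  have "run p (\<lambda>y. y \<in> join G' C) xs = Some v" if "\<forall>x<l. x \<in> G' \<longleftrightarrow> x \<in> G" for G'
  proof (rule l, intro allI impI)
    fix y assume "y < l"
    then have "y div 2 < l" by simp
    then show "(y \<in> join G' C) = (y \<in> join G C)"
      using that by (simp add: join_iff)
  qed
  then show ?thesis using that by blast
qed

definition extension_oracle :: "nat set \<Rightarrow> nat set \<Rightarrow> nat set \<Rightarrow> nat \<Rightarrow> nat \<Rightarrow> bool" where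
  "extension_oracle C F X e y \<longleftrightarrow> y \<in> join (F \<union> (set_decode e \<inter> X)) C"

lemma computable_extension_oracle:
  assumes F: "finite F" and X: "computable_set C X"
  shows "computable C 2 (\<lambda>xs. if extension_oracle C F X (xs ! 1) (xs ! 0) then 1 else 0)"
proof (rule computable_cong)
  let ?x = "\<lambda>xs::nat list. xs ! 0 div 2"
  have x: "computable C 2 ?x"
    by (intro computable_div2 computable_proj) simp
  let ?in = "\<lambda>b. if b then 1 else 0::nat"
  have "computable C 2 (\<lambda>xs. ?in (?x xs \<in> set_decode (set_encode F))
                             + ?in (?x xs \<in> set_decode (xs ! 1)) * ?in (?x xs \<in> X))"
    by (intro computable_add computable_mult computable_set_decode_member computable_member[OF X]
        x computable_proj computable_const) simp
  moreover have "computable C 2 (\<lambda>xs. ?in (?x xs \<in> C))"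
    using computable_unop[where op="\<lambda>x. if x \<in> C then 1 else 0", OF computable_oracle x] by simp
  ultimately show "computable C 2 (\<lambda>xs. if xs ! 0 mod 2 = 0
      then (if ?in (?x xs \<in> set_decode (set_encode F))
               + ?in (?x xs \<in> set_decode (xs ! 1)) * ?in (?x xs \<in> X) = 0 then 0 else 1)
      else ?in (?x xs \<in> C))"
    by (intro computable_if_zero computable_mod2 computable_sgn computable_proj) simp_all
  show "(if xs ! 0 mod 2 = 0
      then (if ?in (?x xs \<in> set_decode (set_encode F))
               + ?in (?x xs \<in> set_decode (xs ! 1)) * ?in (?x xs \<in> X) = 0 then 0 else 1)
      else ?in (?x xs \<in> C)) = (if extension_oracle C F X (xs ! 1) (xs ! 0) then 1 else 0)" for xs
    by (auto simp: extension_oracle_def join_iff F)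
qed


definition condition :: "nat set \<Rightarrow> nat set \<times> nat set \<Rightarrow> bool" where
  "condition C c \<longleftrightarrow> finite (fst c) \<and> infinite (snd c) \<and> (\<forall>a\<in>fst c. \<forall>x\<in>snd c. a < x)
     \<and> computable_set C (snd c)"

definition extends :: "nat set \<times> nat set \<Rightarrow> nat set \<times> nat set \<Rightarrow> bool" where
  "extends d c \<longleftrightarrow> fst c \<subseteq> fst d \<and> fst d \<subseteq> fst c \<union> snd c \<and> snd d \<subseteq> snd c"

definition cylinder :: "nat set \<times> nat set \<Rightarrow> nat set set" where
  "cylinder c = {G. fst c \<subseteq> G \<and> G \<subseteq> fst c \<union> snd c}"

lemma extends_refl: "extends c c"
  unfolding extends_def by simp

lemma extends_trans: "extends e d \<Longrightarrow> extends d c \<Longrightarrow> extends e c"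
  unfolding extends_def by blast

lemma cylinder_mono: "extends d c \<Longrightarrow> cylinder d \<subseteq> cylinder c"
  unfolding extends_def cylinder_def by blast

lemma condition_restrict:
  assumes "condition C (F, X)" "computable_set C Y" "infinite (X \<inter> Y)"
  shows "condition C (F, X \<inter> Y)" "extends (F, X \<inter> Y) (F, X)"
  using assms computable_set_Int by (auto simp: condition_def extends_def)

definition forces_halting :: "nat set \<Rightarrow> nat set \<times> nat set \<Rightarrow> prog \<Rightarrow> nat \<Rightarrow> bool" where
  "forces_halting C c p x \<longleftrightarrow> (\<forall>G\<in>cylinder c. run p (\<lambda>y. y \<in> join G C) [x] \<noteq> None)"

definition halts_on_extension :: "nat set \<Rightarrow> nat set \<times> nat set \<Rightarrow> prog \<Rightarrow> nat \<Rightarrow> bool" where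
  "halts_on_extension C c p x \<longleftrightarrow> (\<exists>e. run p (extension_oracle C (fst c) (snd c) e) [x] \<noteq> None)"

lemma halts_on_extension_if_halts:
  assumes G: "G \<in> cylinder c" and halts: "run p (\<lambda>y. y \<in> join G C) [x] \<noteq> None"
  shows "halts_on_extension C c p x"
proof -
  obtain v where "run p (\<lambda>y. y \<in> join G C) [x] = Some v"
    using halts by blast
  then obtain b where b: "\<And>G'. \<forall>y<b. y \<in> G' \<longleftrightarrow> y \<in> G \<Longrightarrow> run p (\<lambda>y. y \<in> join G' C) [x] = Some v"
    by (rule run_join_use) blast
  let ?D = "G \<inter> {..<b}"
  have "\<forall>y<b. y \<in> fst c \<union> (set_decode (set_encode ?D) \<inter> snd c) \<longleftrightarrow> y \<in> G"
    using G by (auto simp: cylinder_def)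
  then have "run p (extension_oracle C (fst c) (snd c) (set_encode ?D)) [x] = Some v"
    unfolding extension_oracle_def by (rule b)
  then show ?thesis
    unfolding halts_on_extension_def by blast
qed

definition join_use :: "nat set \<Rightarrow> prog \<Rightarrow> nat \<Rightarrow> nat set \<Rightarrow> nat" where
  "join_use C p x D =
     (SOME b. \<forall>G. (\<forall>y<b. y \<in> G \<longleftrightarrow> y \<in> D) \<longrightarrow> run p (\<lambda>y. y \<in> join G C) [x] \<noteq> None)"

lemma join_use_agree:
  assumes "run p (\<lambda>y. y \<in> join D C) [x] \<noteq> None" and "\<forall>y<join_use C p x D. y \<in> G \<longleftrightarrow> y \<in> D"
  shows "run p (\<lambda>y. y \<in> join G C) [x] \<noteq> None"
proof -
  obtain v where "run p (\<lambda>y. y \<in> join D C) [x] = Some v"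
    using assms(1) by blast
  then have "\<exists>b. \<forall>G. (\<forall>y<b. y \<in> G \<longleftrightarrow> y \<in> D) \<longrightarrow> run p (\<lambda>y. y \<in> join G C) [x] \<noteq> None"
    by (rule run_join_use) auto
  from someI_ex[OF this] show ?thesis
    using assms(2) unfolding join_use_def by blast
qed

text \<open>Cutting the reservoir above the use of the halting computation relative to D \<oplus> C
  preserves that computation for every set compatible with the new condition.\<close>

definition force_extension :: "nat set \<Rightarrow> nat set \<times> nat set \<Rightarrow> prog \<Rightarrow> nat \<Rightarrow> nat set \<times> nat set" where
  "force_extension C c p x =
    (let D = fst c \<union> (set_decode (SOME e. run p (extension_oracle C (fst c) (snd c) e) [x] \<noteq> None)
                    \<inter> snd c)
     in (D, snd c \<inter> {join_use C p x D + Max (insert 0 D)<..}))"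

lemma condition_force_extension:
  assumes c: "condition C c" and halts: "halts_on_extension C c p x"
  defines "d \<equiv> force_extension C c p x"
  shows "condition C d" "extends d c" "forces_halting C d p x"
proof -
  obtain F X where FX: "c = (F, X)" by fastforce
  define e where "e = (SOME e. run p (extension_oracle C F X e) [x] \<noteq> None)"
  define D where "D = F \<union> (set_decode e \<inter> X)"
  have D: "run p (\<lambda>y. y \<in> join D C) [x] \<noteq> None"
    using someI_ex[OF halts[unfolded halts_on_extension_def]]
    unfolding FX e_def D_def extension_oracle_def by simp
  define b where "b = join_use C p x D"
  define B where "B = b + Max (insert 0 D)"
  have d: "d = (D, X \<inter> {B<..})"
    unfolding d_def force_extension_def Let_def FX fst_conv snd_conv e_def[symmetric]
      D_def[symmetric] b_def[symmetric] B_def ..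
  have F: "finite F" "infinite X" "\<forall>a\<in>F. \<forall>x\<in>X. a < x" "computable_set C X"
    using c unfolding FX condition_def by auto
  have "finite D"
    using F(1) by (simp add: D_def)
  then have "a \<le> Max (insert 0 D)" if "a \<in> D" for a
    using that by simp
  then have D_below: "a < y" if "a \<in> D" "B < y" for a y
    using that unfolding B_def by fastforce
  have "X \<inter> {B<..} = X - {..B}"
    by auto
  then have inf: "infinite (X \<inter> {B<..})"
    using Diff_infinite_finite[OF finite_atMost F(2)] by simp
  show "condition C d"
    using \<open>finite D\<close> inf D_below computable_set_Int[OF F(4) computable_set_greaterThan]
    by (auto simp: d condition_def)
  show "extends d c"
    by (auto simp: d FX extends_def D_def)
  show "forces_halting C d p x"
    unfolding forces_halting_def
  proof
    fix G assume "G \<in> cylinder d"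
    then have "\<forall>y<b. y \<in> G \<longleftrightarrow> y \<in> D"
      by (auto simp: cylinder_def d B_def)
    then show "run p (\<lambda>y. y \<in> join G C) [x] \<noteq> None"
      using join_use_agree[OF D] by (simp add: b_def)
  qed
qed


lemma sigma1_formula_halts_on_extension:
  assumes "condition C c" "wf_prog 1 p"
  shows "sigma1_formula C m N (\<lambda>V. halts_on_extension C c p (val_code m N V))"
proof -
  have "computable C 2 (\<lambda>xs. if extension_oracle C (fst c) (snd c) (xs ! 1) (xs ! 0) then 1 else 0)"
    using assms(1) by (intro computable_extension_oracle) (auto simp: condition_def)
  then have "ce_in C {x. halts_on_extension C c p x}"
    unfolding halts_on_extension_def by (rule ce_in_halts_for_some_oracle[OF _ assms(2)])
  then show ?thesis
    unfolding sigma1_formula_def by blast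
qed

lemma essential_halts_on_extension:
  assumes "G \<in> cylinder c" "essential m N \<phi> M"
    and "\<And>V. \<forall>i<m. \<forall>j<N. finite (V i j) \<Longrightarrow> \<phi> V \<Longrightarrow> run p (\<lambda>y. y \<in> join G C) [val_code m N V] \<noteq> None"
  shows "essential m N (\<lambda>V. halts_on_extension C c p (val_code m N V)) M"
  unfolding essential_def
proof
  fix s
  obtain V where V: "is_valuation m N M V" "val_gt m N V s" "\<phi> V"
    using assms(2) unfolding essential_def by blast
  then have "run p (\<lambda>y. y \<in> join G C) [val_code m N V] \<noteq> None"
    using assms(3) unfolding is_valuation_def by blast
  then have "halts_on_extension C c p (val_code m N V)"
    by (rule halts_on_extension_if_halts[OF assms(1)])
  then show "\<exists>V. is_valuation m N M V \<and> val_gt m N V s \<and> halts_on_extension C c p (val_code m N V)"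
    using V by blast
qed

definition diagonal_solution ::
    "nat set \<Rightarrow> nat \<Rightarrow> str set \<Rightarrow> str set \<Rightarrow> nat set \<times> nat set \<Rightarrow> nat \<Rightarrow> prog \<Rightarrow> str list list
     \<Rightarrow> (nat \<Rightarrow> nat \<Rightarrow> str set) \<Rightarrow> bool" where
  "diagonal_solution C n A0 A1 c m p L V \<longleftrightarrow>
     is_valuation m (2 ^ n * m) (\<lambda>i j. L ! i ! j) V \<and> diagonalizes m (2 ^ n * m) V A0 A1 \<and>
     halts_on_extension C c p (val_code m (2 ^ n * m) V)"

definition diagonal_step ::
    "nat set \<Rightarrow> nat \<Rightarrow> str set \<Rightarrow> str set \<Rightarrow> nat set \<times> nat set \<Rightarrow> nat \<times> prog \<times> str list list
     \<Rightarrow> nat set \<times> nat set" where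
  "diagonal_step C n A0 A1 c r = (case r of (m, p, L) \<Rightarrow>
     if \<exists>V. diagonal_solution C n A0 A1 c m p L V
     then force_extension C c p
       (val_code m (2 ^ n * m) (SOME V. diagonal_solution C n A0 A1 c m p L V))
     else c)"

lemma diagonal_step_eq:
  "diagonal_solution C n A0 A1 c m p L V \<Longrightarrow> diagonal_step C n A0 A1 c (m, p, L) =
     force_extension C c p (val_code m (2 ^ n * m) (SOME V. diagonal_solution C n A0 A1 c m p L V))"
  unfolding diagonal_step_def by auto

lemma diagonal_solution_Eps:
  "diagonal_solution C n A0 A1 c m p L V \<Longrightarrow>
   diagonal_solution C n A0 A1 c m p L (SOME V. diagonal_solution C n A0 A1 c m p L V)"
  by (rule someI[where P="diagonal_solution C n A0 A1 c m p L"])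

lemma condition_diagonal_step:
  assumes "condition C c"
  shows "condition C (diagonal_step C n A0 A1 c r) \<and> extends (diagonal_step C n A0 A1 c r) c"
proof -
  obtain m p L where r: "r = (m, p, L)" by (cases r) auto
  show ?thesis
  proof (cases "\<exists>V. diagonal_solution C n A0 A1 c m p L V")
    case True
    then obtain V where V: "diagonal_solution C n A0 A1 c m p L V" ..
    then have "halts_on_extension C c p
        (val_code m (2 ^ n * m) (SOME V. diagonal_solution C n A0 A1 c m p L V))"
      using diagonal_solution_Eps unfolding diagonal_solution_def by blast
    then show ?thesis
      using condition_force_extension[OF assms] diagonal_step_eq[OF V] r by simp
  next
    case False
    then show ?thesis by (auto simp: diagonal_step_def r assms extends_refl)
  qed
qed

lemma diagonal_step_forces:
  assumes "condition C c" and "diagonal_solution C n A0 A1 c m p L V"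
  obtains V' where "diagonal_solution C n A0 A1 c m p L V'"
    and "forces_halting C (diagonal_step C n A0 A1 c (m, p, L)) p (val_code m (2 ^ n * m) V')"
proof -
  let ?V = "SOME V. diagonal_solution C n A0 A1 c m p L V"
  have V: "diagonal_solution C n A0 A1 c m p L ?V"
    by (rule diagonal_solution_Eps[OF assms(2)])
  then have "halts_on_extension C c p (val_code m (2 ^ n * m) ?V)"
    unfolding diagonal_solution_def by blast
  then have "forces_halting C (diagonal_step C n A0 A1 c (m, p, L)) p (val_code m (2 ^ n * m) ?V)"
    unfolding diagonal_step_eq[OF assms(2)] by (rule condition_force_extension(3)[OF assms(1)])
  with V show ?thesis by (rule that)
qed

definition cohesive_step :: "(nat \<Rightarrow> nat set) \<Rightarrow> nat \<Rightarrow> nat set \<times> nat set \<Rightarrow> nat set \<times> nat set" where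
  "cohesive_step R i c = (fst c, if infinite (snd c \<inter> R i) then snd c \<inter> R i else snd c \<inter> - R i)"

lemma condition_cohesive_step:
  assumes c: "condition C c" and R: "computable_set C (R i)"
  shows "condition C (cohesive_step R i c)" "extends (cohesive_step R i c) c"
    "snd (cohesive_step R i c) \<subseteq> R i \<or> snd (cohesive_step R i c) \<subseteq> - R i"
proof -
  obtain F X where FX: "c = (F, X)" by fastforce
  have "infinite X" using c unfolding FX condition_def by simp
  then have "infinite (X \<inter> - R i)" if "finite (X \<inter> R i)"
    using that by (metis Compl_eq_Diff_UNIV Diff_Int_distrib Diff_infinite_finite Int_UNIV_right)
  then show "condition C (cohesive_step R i c)" "extends (cohesive_step R i c) c"
    using condition_restrict[of C F X] c R computable_set_Compl[OF R]
    by (auto simp: cohesive_step_def FX)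
  show "snd (cohesive_step R i c) \<subseteq> R i \<or> snd (cohesive_step R i c) \<subseteq> - R i"
    by (auto simp: cohesive_step_def)
qed

definition grow :: "nat set \<times> nat set \<Rightarrow> nat set \<times> nat set" where
  "grow c = (let a = LEAST x. x \<in> snd c in (insert a (fst c), snd c \<inter> {a<..}))"

lemma condition_grow:
  assumes c: "condition C c"
  shows "condition C (grow c)" "extends (grow c) c" "card (fst (grow c)) = Suc (card (fst c))"
proof -
  obtain F X where FX: "c = (F, X)" by fastforce
  have F: "finite F" "infinite X" "\<forall>a\<in>F. \<forall>x\<in>X. a < x" "computable_set C X"
    using c unfolding FX condition_def by auto
  define a where "a = (LEAST x. x \<in> X)"
  have "X \<noteq> {}" using F(2) by auto
  then have a: "a \<in> X" "\<And>x. x \<in> X \<Longrightarrow> a \<le> x"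
    unfolding a_def by (auto intro: LeastI Least_le)
  have "X \<inter> {a<..} = X - {..a}" by auto
  then have "infinite (X \<inter> {a<..})"
    using Diff_infinite_finite[OF finite_atMost F(2)] by simp
  then show "condition C (grow c)" "extends (grow c) c"
    using F a computable_set_Int[OF F(4) computable_set_greaterThan]
    by (fastforce simp: grow_def FX a_def[symmetric] condition_def extends_def)+
  show "card (fst (grow c)) = Suc (card (fst c))"
    using F(1,3) a by (auto simp: grow_def FX a_def[symmetric])
qed

text \<open>The requirement with code s, a triple of the number m of rows, a program enumerating a
  Sigma_1 formula and a matrix given by its rows, is met at stage s + 1.\<close>

fun stage :: "nat set \<Rightarrow> (nat \<Rightarrow> nat set) \<Rightarrow> nat \<Rightarrow> str set \<Rightarrow> str set \<Rightarrow> nat \<Rightarrow> nat set \<times> nat set" where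
  "stage C R n A0 A1 0 = ({}, UNIV)"
| "stage C R n A0 A1 (Suc s) =
     grow (cohesive_step R s (diagonal_step C n A0 A1 (stage C R n A0 A1 s) (from_nat s)))"

lemma sigma1_formula_obtain_prog:
  assumes "sigma1_formula X m N \<phi>"
  obtains p where "wf_prog 1 p"
    and "\<And>V. \<forall>i<m. \<forall>j<N. finite (V i j) \<Longrightarrow> \<phi> V \<longleftrightarrow> run p (\<lambda>y. y \<in> X) [val_code m N V] \<noteq> None"
proof -
  obtain W f where W: "\<And>V. \<forall>i<m. \<forall>j<N. finite (V i j) \<Longrightarrow> \<phi> V \<longleftrightarrow> val_code m N V \<in> W"
    and f: "recfn X 1 f" "\<And>x. x \<in> W \<longleftrightarrow> f [x] \<noteq> None"
    using assms unfolding sigma1_formula_def ce_in_def by blast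
  obtain p where "wf_prog 1 p" "f = run p (\<lambda>y. y \<in> X)"
    using recfn_imp_prog[OF f(1)] by blast
  then show ?thesis
    using that W f(2) by blast
qed

lemma matrix_as_rows: "\<exists>L. \<forall>i<m. \<forall>j<N. L ! i ! j = M i j"
  by (rule exI[of _ "map (\<lambda>i. map (M i) [0..<N]) [0..<m]"]) simp

context
  fixes C :: "nat set" and R :: "nat \<Rightarrow> nat set" and n :: nat and A0 A1 :: "str set"
  assumes R: "unif_computable C R"
begin

lemma condition_stage: "condition C (stage C R n A0 A1 s)"
proof (induction s)
  case 0
  show ?case by (simp add: condition_def computable_set_UNIV)
next
  case (Suc s)
  then show ?case
    using condition_diagonal_step condition_cohesive_step(1) condition_grow(1)
      unif_computable_imp_computable_set[OF R] by simp
qed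

lemma stage_Suc:
  fixes s :: nat
  defines "d \<equiv> diagonal_step C n A0 A1 (stage C R n A0 A1 s) (from_nat s)"
    and "c \<equiv> cohesive_step R s (diagonal_step C n A0 A1 (stage C R n A0 A1 s) (from_nat s))"
  shows "condition C d" "extends d (stage C R n A0 A1 s)" "condition C c" "extends c d"
    "snd c \<subseteq> R s \<or> snd c \<subseteq> - R s" "stage C R n A0 A1 (Suc s) = grow c"
proof -
  show d: "condition C d" "extends d (stage C R n A0 A1 s)"
    unfolding d_def using condition_diagonal_step[OF condition_stage] by blast+
  show "condition C c" "extends c d" "snd c \<subseteq> R s \<or> snd c \<subseteq> - R s"
    unfolding c_def d_def[symmetric]
    using condition_cohesive_step[of C _ R s, OF d(1) unif_computable_imp_computable_set[OF R]]
    by blast+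
  show "stage C R n A0 A1 (Suc s) = grow c"
    by (simp add: c_def d_def)
qed

lemma stage_Suc_extends_diagonal_step:
  "extends (stage C R n A0 A1 (Suc s)) (diagonal_step C n A0 A1 (stage C R n A0 A1 s) (from_nat s))"
  using extends_trans[OF condition_grow(2)[OF stage_Suc(3)] stage_Suc(4)] stage_Suc(6) by simp

lemma stage_mono: "s \<le> t \<Longrightarrow> extends (stage C R n A0 A1 t) (stage C R n A0 A1 s)"
proof (induction t rule: dec_induct)
  case base
  show ?case by (rule extends_refl)
next
  case (step t)
  then show ?case
    using extends_trans[OF stage_Suc_extends_diagonal_step stage_Suc(2)] extends_trans by blast
qed

definition generic :: "nat set" where
  "generic = (\<Union>s. fst (stage C R n A0 A1 s))"

lemma generic_in_cylinder: "generic \<in> cylinder (stage C R n A0 A1 s)"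
  unfolding cylinder_def
proof (intro CollectI conjI subsetI)
  fix x assume "x \<in> generic"
  then obtain t where t: "x \<in> fst (stage C R n A0 A1 t)"
    unfolding generic_def by blast
  show "x \<in> fst (stage C R n A0 A1 s) \<union> snd (stage C R n A0 A1 s)"
    using t stage_mono[of s t] stage_mono[of t s] unfolding extends_def by (cases "s \<le> t") auto
qed (auto simp: generic_def)

lemma card_stage: "s \<le> card (fst (stage C R n A0 A1 s))"
proof (induction s)
  case (Suc s)
  let ?c = "cohesive_step R s (diagonal_step C n A0 A1 (stage C R n A0 A1 s) (from_nat s))"
  have "fst (stage C R n A0 A1 s) \<subseteq> fst ?c" "finite (fst ?c)"
    using stage_Suc(2,3,4) unfolding extends_def condition_def by blast+
  then have "card (fst (stage C R n A0 A1 s)) \<le> card (fst ?c)"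
    by (rule card_mono[rotated])
  then show ?case
    using Suc.IH condition_grow(3)[OF stage_Suc(3)] stage_Suc(6) by simp
qed simp

lemma infinite_generic: "infinite generic"
proof
  assume "finite generic"
  then have "card (fst (stage C R n A0 A1 s)) \<le> card generic" for s
    using card_mono generic_in_cylinder unfolding cylinder_def by blast
  from this[of "Suc (card generic)"] show False
    using card_stage[of "Suc (card generic)"] by linarith
qed

lemma cohesive_generic: "cohesive R generic"
  unfolding cohesive_def
proof (intro conjI allI infinite_generic)
  fix i
  let ?c = "cohesive_step R i (diagonal_step C n A0 A1 (stage C R n A0 A1 i) (from_nat i))"
  have "generic \<subseteq> fst (grow ?c) \<union> snd (grow ?c)"
    using generic_in_cylinder[of "Suc i"] stage_Suc(6) by (simp add: cylinder_def)
  moreover have "snd (grow ?c) \<subseteq> snd ?c"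
    using condition_grow(2)[OF stage_Suc(3)] by (simp add: extends_def)
  ultimately have "generic \<subseteq> fst (grow ?c) \<union> snd ?c"
    by blast
  moreover have "finite (fst (grow ?c))"
    using condition_grow(1)[OF stage_Suc(3)] by (simp add: condition_def)
  ultimately have cover: "generic \<subseteq> fst (grow ?c) \<union> snd ?c" and fin: "finite (fst (grow ?c))"
    by blast+
  show "finite (generic - R i) \<or> finite (generic - - R i)"
  proof -
    have "generic - R i \<subseteq> fst (grow ?c) \<or> generic - - R i \<subseteq> fst (grow ?c)"
      using cover stage_Suc(5)[of i] by blast
    then show ?thesis
      using fin finite_subset by blast
  qed
qed

lemma diagonal_solution_exists:
  assumes fair: "fair n C A0 A1" and p: "wf_prog 1 p"
    and \<phi>: "\<And>V. \<forall>i<m. \<forall>j<2 ^ n * m. finite (V i j) \<Longrightarrow> \<phi> V \<Longrightarrow>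
      run p (\<lambda>y. y \<in> join generic C) [val_code m (2 ^ n * m) V] \<noteq> None"
    and disjoint: "disjoint_matrix m (2 ^ n * m) (\<lambda>i j. L ! i ! j)"
    and essential: "essential m (2 ^ n * m) \<phi> (\<lambda>i j. L ! i ! j)"
  shows "\<exists>V. diagonal_solution C n A0 A1 (stage C R n A0 A1 s) m p L V"
proof -
  let ?\<psi> = "\<lambda>V. halts_on_extension C (stage C R n A0 A1 s) p (val_code m (2 ^ n * m) V)"
  have "sigma1_formula C m (2 ^ n * m) ?\<psi>"
    by (rule sigma1_formula_halts_on_extension[OF condition_stage p])
  moreover have "essential m (2 ^ n * m) ?\<psi> (\<lambda>i j. L ! i ! j)"
    using essential_halts_on_extension[OF generic_in_cylinder essential] \<phi> by blast
  ultimately show ?thesis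
    using fair disjoint unfolding fair_def diagonal_solution_def by blast
qed

lemma fair_generic:
  assumes fair: "fair n C A0 A1"
  shows "fair n (join generic C) A0 A1"
  unfolding fair_def
proof (intro allI impI)
  fix m :: nat and \<phi> :: "(nat \<Rightarrow> nat \<Rightarrow> str set) \<Rightarrow> bool" and M :: "nat \<Rightarrow> nat \<Rightarrow> str"
  let ?N = "2 ^ n * m"
  assume sigma1: "sigma1_formula (join generic C) m ?N \<phi>"
    and disjoint: "disjoint_matrix m ?N M" and essential: "essential m ?N \<phi> M"
  obtain p where p: "wf_prog 1 p" and \<phi>: "\<And>V. \<forall>i<m. \<forall>j<?N. finite (V i j) \<Longrightarrow>
      \<phi> V \<longleftrightarrow> run p (\<lambda>y. y \<in> join generic C) [val_code m ?N V] \<noteq> None"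
    using sigma1 by (rule sigma1_formula_obtain_prog) blast
  obtain L where L: "\<forall>i<m. \<forall>j<?N. L ! i ! j = M i j"
    using matrix_as_rows by blast
  define s where "s = to_nat (m, p, L)"
  let ?c = "stage C R n A0 A1 s"
  have "\<exists>V. diagonal_solution C n A0 A1 ?c m p L V"
    using disjoint essential L
    by (intro diagonal_solution_exists[OF fair p])
      (auto simp: \<phi> disjoint_matrix_def essential_def is_valuation_def)
  then obtain V where V: "diagonal_solution C n A0 A1 ?c m p L V"
    and forces: "forces_halting C (diagonal_step C n A0 A1 ?c (m, p, L)) p (val_code m ?N V)"
    using diagonal_step_forces[OF condition_stage] by blast
  have "generic \<in> cylinder (diagonal_step C n A0 A1 ?c (from_nat s))"
    using generic_in_cylinder cylinder_mono[OF stage_Suc_extends_diagonal_step] by blast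
  then have "\<phi> V"
    using forces V \<phi> unfolding s_def forces_halting_def diagonal_solution_def is_valuation_def
    by simp
  then show "\<exists>V. is_valuation m ?N M V \<and> diagonalizes m ?N V A0 A1 \<and> \<phi> V"
    using V L unfolding diagonal_solution_def is_valuation_def by auto
qed

end

theorem mainTheorem8:
  fixes n :: nat and A0 A1 :: "bool list set" and C :: "nat set" and R :: "nat \<Rightarrow> nat set"
  assumes "n \<ge> 1"
    and "fair n C A0 A1"
    and "unif_computable C R"
  shows "\<exists>G. cohesive R G \<and> fair n (join G C) A0 A1"
  using cohesive_generic[OF assms(3)] fair_generic[OF assms(3) assms(2)] by blast

end
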